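(* Let $\mathbf a:\mathbb R^D\to\mathcal H$ define a CMF dictionary with kernel $\kappa$, $D\ge1$. Let $\mathcal S^\star=\{\theta^\star_1,\theta^\star_2\}$ with $\theta^\star_1\ne\theta^\star_2$, let $\mathbf G\in\mathbb R^{2\times2}$, $\mathbf G[\ell,\ell']=\kappa(\theta^\star_\ell,\theta^\star_{\ell'})$, and $\mathbf g_\theta\in\mathbb R^2$, $\mathbf g_\theta[\ell]=\kappa(\theta,\theta^\star_\ell)$. If $\|\mathbf G^{-1}\mathbf g_\theta\|_1<1$ for every $\theta\in\mathrm{Cart}(\mathcal S^\star)\setminus\mathcal S^\star$, then OMP achieves exact $2$-step recovery of $\mathcal S^\star$.
   Context: CMF: $\varphi:[0,\infty)\to\mathbb R$ infinitely differentiable on $(0,\infty)$, right-continuous at $0$, $(-1)^n\varphi^{(n)}(x)\ge0$ for $x>0$, $n\ge0$. A CMF dictionary in dimension $D$ is $\mathbf a:\mathbb R^D\to\mathcal H$ ($\mathcal H$ real Hilbert) with $\kappa(\theta,\theta')=\langle\mathbf a(\theta),\mathbf a(\theta')\rangle=\varphi(\|\theta-\theta'\|_p^p)$, $\varphi$ a CMF, $\varphi(0)=1$, $\lim_{x\to\infty}\varphi(x)=0$, $0<p\le1$. $\mathrm{Cart}(\mathcal S)=\prod_{d=1}^D\{\theta[d]:\theta\in\mathcal S\}$. OMP with input $\mathbf y$: $\mathbf r=\mathbf y$, $\widehat{\mathcal S}=\emptyset$; while $\mathbf r\ne0$: choose any $\widehat\theta_t\in\arg\max_\theta|\langle\mathbf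 a(\theta),\mathbf r\rangle|$, add it to $\widehat{\mathcal S}$, set $\mathbf r$ to $\mathbf y$ minus its orthogonal projection onto $\mathrm{span}\{\mathbf a(\widehat\theta_1),\dots,\mathbf a(\widehat\theta_t)\}$. A reachable support is any final $\widehat{\mathcal S}$ obtainable through some choices of maximizers. Exact $2$-step recovery of $\mathcal S^\star$: for all nonzero $c_1,c_2$, every reachable support of OMP with input $c_1\mathbf a(\theta^\star_1)+c_2\mathbf a(\theta^\star_2)$ equals $\mathcal S^\star$. *)

theory Defs
  imports "HOL-Analysis.Analysis"
begin

definition CMF :: "(real \<Rightarrow> real) \<Rightarrow> bool" where
  "CMF \<phi> \<longleftrightarrow>
     (\<forall>n::nat. \<forall>x>0. ((deriv ^^ n) \<phi> has_real_derivative (deriv ^^ Suc n) \<phi> x) (at x)) \<and>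
     continuous (at_right 0) \<phi> \<and>
     (\<forall>n::nat. \<forall>x>0. (-1) ^ n * (deriv ^^ n) \<phi> x \<ge> 0)"

definition lp_pow :: "real \<Rightarrow> real^'d \<Rightarrow> real^'d \<Rightarrow> real" where
  "lp_pow p \<theta> \<theta>' = (\<Sum>d\<in>UNIV. \<bar>\<theta> $ d - \<theta>' $ d\<bar> powr p)"

definition CMF_dictionary ::
  "(real^'d \<Rightarrow> 'h::{real_inner,complete_space}) \<Rightarrow> (real \<Rightarrow> real) \<Rightarrow> real \<Rightarrow> bool" where
  "CMF_dictionary a \<phi> p \<longleftrightarrow>
     CMF \<phi> \<and> \<phi> 0 = 1 \<and> (\<phi> \<longlongrightarrow> 0) at_top \<and> 0 < p \<and> p \<le> 1 \<and>
     (\<forall>\<theta> \<theta>'. inner (a \<theta>) (a \<theta>') = \<phi> (lp_pow p \<theta> \<theta>'))"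

definition kernel :: "(real^'d \<Rightarrow> 'h::real_inner) \<Rightarrow> real^'d \<Rightarrow> real^'d \<Rightarrow> real" where
  "kernel a \<theta> \<theta>' = inner (a \<theta>) (a \<theta>')"

definition orth_proj :: "'h::real_inner set \<Rightarrow> 'h \<Rightarrow> 'h" where
  "orth_proj W y = (THE v. v \<in> W \<and> (\<forall>w\<in>W. inner (y - v) w = 0))"

definition omp_residual :: "(real^'d \<Rightarrow> 'h::real_inner) \<Rightarrow> 'h \<Rightarrow> (real^'d) set \<Rightarrow> 'h" where
  "omp_residual a y S = y - orth_proj (span (a ` S)) y"

text \<open>States (support, residual) reachable by OMP on input y, for some choice of maximizers.\<close>
inductive omp_state :: "(real^'d \<Rightarrow> 'h::real_inner) \<Rightarrow> 'h \<Rightarrow> (real^'d) set \<Rightarrow> 'h \<Rightarrow> bool"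
  for a :: "real^'d \<Rightarrow> 'h" and y :: 'h where
  init: "omp_state a y {} y"
| step: "\<lbrakk> omp_state a y S r; r \<noteq> 0;
           \<forall>\<theta>. \<bar>inner (a \<theta>) r\<bar> \<le> \<bar>inner (a \<theta>t) r\<bar> \<rbrakk>
         \<Longrightarrow> omp_state a y (insert \<theta>t S) (omp_residual a y (insert \<theta>t S))"

definition omp_reachable_support :: "(real^'d \<Rightarrow> 'h::real_inner) \<Rightarrow> 'h \<Rightarrow> (real^'d) set \<Rightarrow> bool" where
  "omp_reachable_support a y S \<longleftrightarrow> omp_state a y S 0"

definition exact_2step_recovery :: "(real^'d \<Rightarrow> 'h::real_inner) \<Rightarrow> real^'d \<Rightarrow> real^'d \<Rightarrow> bool" where
  "exact_2step_recovery a t1 t2 \<longleftrightarrow>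
     (\<forall>c1 c2 :: real. c1 \<noteq> 0 \<longrightarrow> c2 \<noteq> 0 \<longrightarrow>
        (\<forall>S. omp_reachable_support a (c1 *\<^sub>R a t1 + c2 *\<^sub>R a t2) S \<longrightarrow> S = {t1, t2}))"

definition Cart :: "(real^'d) set \<Rightarrow> (real^'d) set" where
  "Cart S = {\<theta>. \<forall>d. \<theta> $ d \<in> (\<lambda>t. t $ d) ` S}"

end

theory Submission
  imports Defs
begin

text \<open>Write \<open>P\<close>, \<open>Q\<close>, \<open>\<Delta>\<close> for the \<open>\<ell>\<^sub>p\<^sup>p\<close>-distances from an atom \<open>\<theta>\<close> to \<open>t1\<close>, \<open>t2\<close> and from \<open>t1\<close>
to \<open>t2\<close>. For \<open>p \<le> 1\<close> the quantity \<open>\<ell>\<^sub>p\<^sup>p\<close> is a metric, so \<open>(P, Q)\<close> lies in the triangle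
\<open>\<Delta> \<le> P + Q\<close>, \<open>\<bar>P - Q\<bar> \<le> \<Delta>\<close>. The correlation of \<open>a \<theta>\<close> with \<open>c1 a t1 + c2 a t2\<close> is
\<open>c1 \<phi> P + c2 \<phi> Q\<close>, and on that triangle its absolute value is strictly below the larger of
its values at the two vertices \<open>(0, \<Delta>)\<close> and \<open>(\<Delta>, 0)\<close>: for coefficients of equal sign because
the convex \<open>\<phi>\<close> lies strictly below its chords, for opposite signs because the drop
\<open>\<phi> P - \<phi> (P + \<Delta>)\<close> is strictly smaller than the initial drop \<open>\<phi> 0 - \<phi> \<Delta>\<close>. Hence OMP selects an atom of the support; the residual is
then a multiple of \<open>a u - \<phi> \<Delta> a v\<close>, whose correlations have the same form, so OMP selects
the other atom and stops with zero residual.\<close>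

subsection \<open>The \<open>\<ell>\<^sub>p\<^sup>p\<close> distance for \<open>p \<le> 1\<close>\<close>

lemma powr_add_le:
  fixes a b p :: real
  assumes "0 \<le> a" "0 \<le> b" "0 < p" "p \<le> 1"
  shows "(a + b) powr p \<le> a powr p + b powr p"
proof (cases "a + b = 0")
  case True
  then show ?thesis using assms by simp
next
  case False
  define s where "s = a + b"
  have s: "s > 0" using False assms unfolding s_def by simp
  have ge: "x * s powr (p - 1) \<le> x powr p" if "0 \<le> x" "x \<le> s" for x
  proof (cases "x = 0")
    case False
    then have x: "x > 0" using that by simp
    have "s powr (p - 1) \<le> x powr (p - 1)"
      using powr_mono2'[of "p - 1" x s] x that assms by simp
    moreover have "x powr p = x * x powr (p - 1)"
      using x by (simp add: powr_mult_base)
    ultimately show ?thesis using x by (simp add: mult_left_mono)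
  qed simp
  have "s powr p = s * s powr (p - 1)" using s by (simp add: powr_mult_base)
  also have "\<dots> = a * s powr (p - 1) + b * s powr (p - 1)"
    unfolding s_def by (simp add: algebra_simps)
  also have "\<dots> \<le> a powr p + b powr p"
    using ge[of a] ge[of b] assms unfolding s_def by (intro add_mono) auto
  finally show ?thesis unfolding s_def .
qed

lemma lp_pow_triangle:
  assumes "0 < p" "p \<le> 1"
  shows "lp_pow p x z \<le> lp_pow p x y + lp_pow p y z"
proof -
  have "\<bar>x $ d - z $ d\<bar> powr p \<le> \<bar>x $ d - y $ d\<bar> powr p + \<bar>y $ d - z $ d\<bar> powr p" for d
  proof -
    have "\<bar>x $ d - z $ d\<bar> powr p \<le> (\<bar>x $ d - y $ d\<bar> + \<bar>y $ d - z $ d\<bar>) powr p"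
      using assms by (intro powr_mono2) auto
    also have "\<dots> \<le> \<bar>x $ d - y $ d\<bar> powr p + \<bar>y $ d - z $ d\<bar> powr p"
      using assms by (intro powr_add_le) auto
    finally show ?thesis .
  qed
  then show ?thesis
    unfolding lp_pow_def sum.distrib[symmetric] by (intro sum_mono) auto
qed

lemma lp_pow_commute: "lp_pow p x y = lp_pow p y x"
  unfolding lp_pow_def by (simp add: abs_minus_commute)

lemma lp_pow_nonneg: "0 \<le> lp_pow p x y"
  unfolding lp_pow_def by (intro sum_nonneg) auto

lemma lp_pow_self [simp]: "lp_pow p x x = 0"
  unfolding lp_pow_def by simp

lemma lp_pow_eq_0_iff: "lp_pow p x y = 0 \<longleftrightarrow> x = y"
proof
  assume "lp_pow p x y = 0"
  then have "\<forall>d\<in>UNIV. \<bar>x $ d - y $ d\<bar> powr p = 0"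
    unfolding lp_pow_def by (subst sum_nonneg_eq_0_iff[symmetric]) auto
  then show "x = y" by (simp add: vec_eq_iff)
qed simp

lemma lp_pow_pos: "x \<noteq> y \<Longrightarrow> 0 < lp_pow p x y"
  using lp_pow_nonneg[of p x y] lp_pow_eq_0_iff[of p x y] by linarith

lemma lp_pow_triangle_region:
  assumes "0 < p" "p \<le> 1"
  shows "lp_pow p u v \<le> lp_pow p \<theta> u + lp_pow p \<theta> v"
    and "lp_pow p \<theta> u \<le> lp_pow p \<theta> v + lp_pow p u v"
    and "lp_pow p \<theta> v \<le> lp_pow p \<theta> u + lp_pow p u v"
  using lp_pow_triangle[OF assms, where x=u and y=\<theta> and z=v]
    lp_pow_triangle[OF assms, where x=\<theta> and y=v and z=u]
    lp_pow_triangle[OF assms, where x=\<theta> and y=u and z=v] lp_pow_commute[of p \<theta> u] lp_pow_commute[of p v u]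
  by auto

subsection \<open>Convex profiles with decreasing second derivative\<close>

locale cm_profile =
  fixes \<phi> \<phi>' \<phi>'' :: "real \<Rightarrow> real"
  assumes continuous: "continuous_on {0..} \<phi>"
    and at_0: "\<phi> 0 = 1"
    and tendsto_0: "(\<phi> \<longlongrightarrow> 0) at_top"
    and nonneg: "0 \<le> x \<Longrightarrow> 0 \<le> \<phi> x"
    and has_deriv: "0 < x \<Longrightarrow> (\<phi> has_real_derivative \<phi>' x) (at x)"
    and has_deriv': "0 < x \<Longrightarrow> (\<phi>' has_real_derivative \<phi>'' x) (at x)"
    and deriv_nonpos: "0 < x \<Longrightarrow> \<phi>' x \<le> 0"
    and deriv'_nonneg: "0 < x \<Longrightarrow> 0 \<le> \<phi>'' x"
    and deriv'_antimono: "0 < x \<Longrightarrow> x \<le> y \<Longrightarrow> \<phi>'' y \<le> \<phi>'' x"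
begin

lemma mvt:
  assumes "0 \<le> x" "x < y"
  obtains z where "x < z" "z < y" "\<phi> y - \<phi> x = (y - x) * \<phi>' z"
proof -
  have "continuous_on {x..y} \<phi>" using continuous by (rule continuous_on_subset) (use assms in auto)
  moreover have "\<And>z. x < z \<Longrightarrow> z < y \<Longrightarrow> \<phi> differentiable (at z)"
    using has_deriv assms real_differentiable_def by (metis le_less_trans)
  ultimately obtain l z where z: "x < z" "z < y" "(\<phi> has_real_derivative l) (at z)"
      "\<phi> y - \<phi> x = (y - x) * l"
    using MVT[OF assms(2)] by blast
  moreover have "l = \<phi>' z" using has_deriv[of z] z assms DERIV_unique by force
  ultimately show ?thesis using that by blast
qed

lemma mvt_deriv:
  assumes "0 < x" "x < y"
  obtains z where "x < z" "z < y" "\<phi>' y - \<phi>' x = (y - x) * \<phi>'' z"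
  using MVT2[OF assms(2), of \<phi>' \<phi>''] has_deriv' assms that by force

lemma antimono: "0 \<le> x \<Longrightarrow> x \<le> y \<Longrightarrow> \<phi> y \<le> \<phi> x"
proof (cases "x = y")
  case False
  assume "0 \<le> x" "x \<le> y"
  with False obtain z where "x < z" "z < y" "\<phi> y - \<phi> x = (y - x) * \<phi>' z"
    using mvt[of x y] by auto
  moreover have "\<phi>' z \<le> 0" using deriv_nonpos \<open>x < z\<close> \<open>0 \<le> x\<close> by auto
  ultimately show ?thesis using \<open>x \<le> y\<close> by (smt (verit) mult_nonneg_nonpos)
qed simp

lemma deriv_mono:
  assumes "0 < x" "x \<le> y"
  shows "\<phi>' x \<le> \<phi>' y"
proof (rule DERIV_nonneg_imp_nondecreasing[OF assms(2)])
  fix z assume "x \<le> z"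
  then have "0 < z" using assms(1) by simp
  then show "\<exists>d. DERIV \<phi>' z :> d \<and> 0 \<le> d" using has_deriv' deriv'_nonneg by blast
qed

text \<open>Since \<open>\<phi>''\<close> is nonnegative and decreasing, \<open>\<phi>''\<close> vanishes beyond a point where \<open>\<phi>'\<close> is
locally constant, so \<open>\<phi>\<close> is affine there; nonnegativity and the limit \<open>0\<close> force it to be \<open>0\<close>.\<close>

lemma deriv_eq_imp_vanishes:
  assumes "0 < x" "x < y" "\<phi>' x = \<phi>' y"
  shows "\<phi>' x = 0" and "\<And>z. x \<le> z \<Longrightarrow> \<phi> z = 0"
proof -
  obtain w where w: "x < w" "w < y" "\<phi>' y - \<phi>' x = (y - x) * \<phi>'' w"
    using mvt_deriv[of x y] assms by auto
  then have "\<phi>'' w = 0" using assms by simp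
  have deriv_const: "\<phi>' z = \<phi>' x" if "x \<le> z" for z
  proof (cases "z \<le> y")
    case True
    then show ?thesis using deriv_mono[of x z] deriv_mono[of z y] assms that by auto
  next
    case False
    then obtain u where u: "y < u" "u < z" "\<phi>' z - \<phi>' y = (z - y) * \<phi>'' u"
      using mvt_deriv[of y z] assms by auto
    have "\<phi>'' u \<le> 0" using deriv'_antimono[of w u] w u assms \<open>\<phi>'' w = 0\<close> by auto
    then have "\<phi>' z \<le> \<phi>' y" using u False by (smt (verit) mult_nonneg_nonpos)
    moreover have "\<phi>' y \<le> \<phi>' z" using deriv_mono[of y z] False assms by auto
    ultimately show ?thesis using assms by auto
  qed
  have affine: "\<phi> z = \<phi> x + (z - x) * \<phi>' x" if "x \<le> z" for z
  proof (cases "z = x")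
    case False
    then have "x < z" using that by simp
    then obtain v where "x < v" "v < z" "\<phi> z - \<phi> x = (z - x) * \<phi>' v"
      using mvt[of x z] assms(1) by auto
    then show ?thesis using deriv_const[of v] by auto
  qed simp
  show "\<phi>' x = 0"
  proof (rule ccontr)
    assume "\<phi>' x \<noteq> 0"
    then have neg: "\<phi>' x < 0" using deriv_nonpos assms by force
    define z where "z = x + (\<phi> x + 1) / (- \<phi>' x)"
    have "0 \<le> \<phi> x" using nonneg assms by simp
    then have "x \<le> z" unfolding z_def using neg by (simp add: divide_nonneg_neg)
    have "(z - x) * \<phi>' x = - (\<phi> x + 1)" unfolding z_def using neg by simp
    then have "\<phi> z = - 1" using affine[OF \<open>x \<le> z\<close>] by simp
    then show False using nonneg[of z] \<open>x \<le> z\<close> assms by simp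
  qed
  have const: "\<phi> z = \<phi> x" if "x \<le> z" for z using affine[OF that] \<open>\<phi>' x = 0\<close> by simp
  have "eventually (\<lambda>z. \<phi> z = \<phi> x) at_top"
    using eventually_ge_at_top[of x] by eventually_elim (rule const)
  then have "(\<phi> \<longlongrightarrow> \<phi> x) at_top" by (simp add: tendsto_eventually)
  then have "\<phi> x = 0" using tendsto_0 tendsto_unique trivial_limit_at_top_linorder by blast
  then show "\<phi> z = 0" if "x \<le> z" for z using const[OF that] by simp
qed

lemma less_one:
  assumes "0 < x"
  shows "\<phi> x < 1"
proof (rule ccontr)
  assume "\<not> \<phi> x < 1"
  then have "\<phi> x = 1" using antimono[of 0 x] at_0 assms by auto
  obtain z where z: "0 < z" "z < x" "\<phi> x - \<phi> 0 = (x - 0) * \<phi>' z"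
    using mvt[of 0 x] assms by auto
  then have "\<phi>' z = 0" using \<open>\<phi> x = 1\<close> at_0 by simp
  moreover have "\<phi>' (z + 1) = 0"
    using deriv_mono[of z "z + 1"] deriv_nonpos[of "z + 1"] z(1) \<open>\<phi>' z = 0\<close> by linarith
  ultimately have "\<phi> x = 0"
    using deriv_eq_imp_vanishes(2)[of z "z + 1" x] z by simp
  then show False using \<open>\<phi> x = 1\<close> by simp
qed

lemma below_chord:
  assumes "0 < x" "x < \<Delta>"
  shows "\<Delta> * \<phi> x < \<Delta> - x * (1 - \<phi> \<Delta>)"
proof -
  obtain u where u: "0 < u" "u < x" "\<phi> x - \<phi> 0 = (x - 0) * \<phi>' u"
    using mvt[of 0 x] assms by auto
  obtain v where v: "x < v" "v < \<Delta>" "\<phi> \<Delta> - \<phi> x = (\<Delta> - x) * \<phi>' v"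
    using mvt[of x \<Delta>] assms by auto
  have "\<phi>' u \<noteq> \<phi>' v"
  proof
    assume "\<phi>' u = \<phi>' v"
    then have "\<phi>' u = 0" using deriv_eq_imp_vanishes(1)[of u v] u v by auto
    then show False using u at_0 less_one[of x] assms by simp
  qed
  then have "\<phi>' u < \<phi>' v" using deriv_mono[of u v] u v by auto
  then have "x * (\<Delta> - x) * (\<phi>' u - \<phi>' v) < 0"
    using assms by (simp add: mult_pos_neg)
  moreover have "\<Delta> * \<phi> x - (\<Delta> - x * (1 - \<phi> \<Delta>)) = x * (\<Delta> - x) * (\<phi>' u - \<phi>' v)"
  proof -
    have e1: "\<phi> x = 1 + x * \<phi>' u" using u at_0 by simp
    have e2: "\<phi> \<Delta> = 1 + x * \<phi>' u + (\<Delta> - x) * \<phi>' v" using v e1 by simp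
    show ?thesis unfolding e2 e1 by (simp add: algebra_simps)
  qed
  ultimately show ?thesis by linarith
qed

lemma drop_less_initial_drop:
  assumes "0 < P" "0 < \<Delta>"
  shows "\<phi> P - \<phi> (P + \<Delta>) < 1 - \<phi> \<Delta>"
proof -
  define w where "w = (\<lambda>x. \<phi> x - \<phi> (x + \<Delta>))"
  have has_deriv_w: "(w has_real_derivative (\<phi>' z - \<phi>' (z + \<Delta>))) (at z)" if "0 < z" for z
  proof -
    have "((\<lambda>x. \<phi> (x + \<Delta>)) has_real_derivative \<phi>' (z + \<Delta>)) (at z)"
      using has_deriv[of "z + \<Delta>"] that assms DERIV_shift by auto
    then show ?thesis unfolding w_def using has_deriv[OF that] by (intro DERIV_diff)
  qed
  have "continuous_on {0..P} \<phi>" using continuous by (rule continuous_on_subset) auto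
  moreover have "continuous_on {0..P} (\<lambda>x. \<phi> (x + \<Delta>))"
    by (rule continuous_on_compose2[OF continuous]) (use assms in \<open>auto intro: continuous_on_add\<close>)
  ultimately have "continuous_on {0..P} w" unfolding w_def by (intro continuous_on_diff)
  moreover have "\<And>x. 0 < x \<Longrightarrow> x < P \<Longrightarrow> w differentiable (at x)"
    using has_deriv_w real_differentiable_def by blast
  ultimately obtain l z where z: "0 < z" "z < P" "(w has_real_derivative l) (at z)"
      "w P - w 0 = (P - 0) * l"
    using MVT[OF assms(1)] by blast
  then have l: "l = \<phi>' z - \<phi>' (z + \<Delta>)" using has_deriv_w[of z] DERIV_unique by blast
  have "\<phi>' z \<noteq> \<phi>' (z + \<Delta>)"
  proof
    assume "\<phi>' z = \<phi>' (z + \<Delta>)"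
    then have "w P = 0" "l = 0"
      using deriv_eq_imp_vanishes(2)[of z "z + \<Delta>"] z assms l unfolding w_def by auto
    then have "\<phi> \<Delta> = 1" using z(4) at_0 unfolding w_def by simp
    then show False using less_one[of \<Delta>] assms by simp
  qed
  then have "l < 0" using l deriv_mono[of z "z + \<Delta>"] z assms by auto
  then have "P * l < 0" using assms by (simp add: mult_pos_neg)
  then have "w P < w 0" using z(4) by simp
  then show ?thesis unfolding w_def using at_0 by simp
qed

text \<open>In the following bounds \<open>P\<close>, \<open>Q\<close>, \<open>\<Delta>\<close> satisfy the triangle inequalities, which
imply \<open>0 \<le> P\<close> and \<open>0 \<le> Q\<close>; the excluded points are the two atoms of the support.\<close>

lemma correlation_bound_pos_pos:
  assumes c: "0 < c1" "0 < c2" and "0 < \<Delta>"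
    and R: "\<Delta> \<le> P + Q" "P \<le> Q + \<Delta>" "Q \<le> P + \<Delta>"
    and not_vertex: "\<not> (P = 0 \<and> Q = \<Delta>)" "\<not> (P = \<Delta> \<and> Q = 0)"
  shows "c1 * \<phi> P + c2 * \<phi> Q < max (c1 + c2 * \<phi> \<Delta>) (c1 * \<phi> \<Delta> + c2)"
proof -
  consider "P = 0" | "\<Delta> \<le> P" | "0 < P \<and> P < \<Delta>" using R by linarith
  then show ?thesis
  proof cases
    case 1
    then show ?thesis using R not_vertex by auto
  next
    case 2
    then have "0 < Q" using R not_vertex by auto
    then have "c2 * \<phi> Q < c2" using less_one[of Q] c by simp
    moreover have "c1 * \<phi> P \<le> c1 * \<phi> \<Delta>"
      using antimono[of \<Delta> P] 2 \<open>0 < \<Delta>\<close> c by (simp add: mult_left_mono)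
    ultimately show ?thesis by linarith
  next
    case 3
    define A where "A = c1 + c2 * \<phi> \<Delta>"
    define B where "B = c1 * \<phi> \<Delta> + c2"
    have "c2 * \<phi> Q \<le> c2 * \<phi> (\<Delta> - P)"
      using antimono[of "\<Delta> - P" Q] 3 R c by (simp add: mult_left_mono)
    then have "\<Delta> * (c1 * \<phi> P + c2 * \<phi> Q) \<le> c1 * (\<Delta> * \<phi> P) + c2 * (\<Delta> * \<phi> (\<Delta> - P))"
      using mult_left_mono[of _ _ \<Delta>] \<open>0 < \<Delta>\<close> by (simp add: algebra_simps)
    also have "\<dots> < c1 * (\<Delta> - P * (1 - \<phi> \<Delta>)) + c2 * (\<Delta> - (\<Delta> - P) * (1 - \<phi> \<Delta>))"
      using below_chord[of P \<Delta>] below_chord[of "\<Delta> - P" \<Delta>] 3 c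
      by (intro add_strict_mono mult_strict_left_mono) auto
    also have "\<dots> = (\<Delta> - P) * A + P * B" unfolding A_def B_def by (simp add: algebra_simps)
    also have "\<dots> \<le> (\<Delta> - P) * max A B + P * max A B"
      using 3 by (intro add_mono mult_left_mono) auto
    also have "\<dots> = \<Delta> * max A B" by (simp add: algebra_simps)
    finally show ?thesis unfolding A_def B_def using \<open>0 < \<Delta>\<close> by simp
  qed
qed

lemma correlation_bound_pos_neg:
  assumes c: "0 < c1" "0 < k" and "0 < \<Delta>"
    and R: "\<Delta> \<le> P + Q" "P \<le> Q + \<Delta>" "Q \<le> P + \<Delta>"
    and not_vertex: "\<not> (P = 0 \<and> Q = \<Delta>)"
  shows "c1 * \<phi> P - k * \<phi> Q < max \<bar>c1 - k * \<phi> \<Delta>\<bar> \<bar>c1 * \<phi> \<Delta> - k\<bar>"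
proof -
  have "0 < P" using R not_vertex by (cases "P = 0") auto
  have drop: "\<phi> P - \<phi> (P + \<Delta>) < 1 - \<phi> \<Delta>"
    using drop_less_initial_drop[OF \<open>0 < P\<close> \<open>0 < \<Delta>\<close>] .
  have "c1 * \<phi> P - k * \<phi> Q \<le> c1 * \<phi> P - k * \<phi> (P + \<Delta>)"
    using antimono[of Q "P + \<Delta>"] R c by simp
  also have "\<dots> < max \<bar>c1 - k * \<phi> \<Delta>\<bar> \<bar>c1 * \<phi> \<Delta> - k\<bar>"
  proof (cases "c1 \<le> k")
    case True
    have "0 \<le> (k - c1) * \<phi> (P + \<Delta>)" using nonneg[of "P + \<Delta>"] \<open>0 < P\<close> \<open>0 < \<Delta>\<close> True by simp
    moreover have "c1 * (\<phi> P - \<phi> (P + \<Delta>)) < c1 * (1 - \<phi> \<Delta>)" using drop c by simp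
    ultimately have "c1 * \<phi> P - k * \<phi> (P + \<Delta>) < k - c1 * \<phi> \<Delta>"
      using True by (simp add: algebra_simps)
    then show ?thesis by simp
  next
    case False
    have "k * (\<phi> P - 1) \<le> k * (\<phi> (P + \<Delta>) - \<phi> \<Delta>)" using drop c by simp
    moreover have "(c1 - k) * (\<phi> P - 1) < 0" using False less_one[OF \<open>0 < P\<close>] by (simp add: mult_pos_neg)
    ultimately have "c1 * \<phi> P - k * \<phi> (P + \<Delta>) < c1 - k * \<phi> \<Delta>" by (simp add: algebra_simps)
    then show ?thesis by simp
  qed
  finally show ?thesis .
qed

lemma correlation_bound:
  assumes c: "c1 \<noteq> 0" "c2 \<noteq> 0" and "0 < \<Delta>"
    and R: "\<Delta> \<le> P + Q" "P \<le> Q + \<Delta>" "Q \<le> P + \<Delta>"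
    and not_vertex: "\<not> (P = 0 \<and> Q = \<Delta>)" "\<not> (P = \<Delta> \<and> Q = 0)"
  shows "c1 * \<phi> P + c2 * \<phi> Q < max \<bar>c1 + c2 * \<phi> \<Delta>\<bar> \<bar>c1 * \<phi> \<Delta> + c2\<bar>"
proof -
  consider "c1 < 0 \<and> c2 < 0" | "0 < c1 \<and> 0 < c2" | "0 < c1 \<and> c2 < 0" | "c1 < 0 \<and> 0 < c2"
    using c by linarith
  then show ?thesis
  proof cases
    case 1
    have "0 \<le> \<phi> P" "0 \<le> \<phi> Q" "0 \<le> \<phi> \<Delta>" using nonneg R \<open>0 < \<Delta>\<close> by auto
    then have "c1 * \<phi> P \<le> 0" "c2 * \<phi> Q \<le> 0" "c2 * \<phi> \<Delta> \<le> 0"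
      using 1 by (auto intro: mult_nonpos_nonneg)
    then show ?thesis using 1 by linarith
  next
    case 2
    then show ?thesis
      using correlation_bound_pos_pos[of c1 c2 \<Delta> P Q] \<open>0 < \<Delta>\<close> R not_vertex by fastforce
  next
    case 3
    then show ?thesis
      using correlation_bound_pos_neg[of c1 "- c2" \<Delta> P Q] \<open>0 < \<Delta>\<close> R not_vertex by simp
  next
    case 4
    have "Q \<noteq> 0" using R not_vertex by auto
    with 4 show ?thesis
      using correlation_bound_pos_neg[of c2 "- c1" \<Delta> Q P] \<open>0 < \<Delta>\<close> R not_vertex
      by (simp add: algebra_simps max.commute)
  qed
qed

lemma abs_correlation_bound:
  assumes c: "c1 \<noteq> 0" "c2 \<noteq> 0" and "0 < \<Delta>"
    and R: "\<Delta> \<le> P + Q" "P \<le> Q + \<Delta>" "Q \<le> P + \<Delta>"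
    and not_vertex: "\<not> (P = 0 \<and> Q = \<Delta>)" "\<not> (P = \<Delta> \<and> Q = 0)"
  shows "\<bar>c1 * \<phi> P + c2 * \<phi> Q\<bar> < max \<bar>c1 + c2 * \<phi> \<Delta>\<bar> \<bar>c1 * \<phi> \<Delta> + c2\<bar>"
proof -
  have "(- c1) * \<phi> P + (- c2) * \<phi> Q < max \<bar>(- c1) + (- c2) * \<phi> \<Delta>\<bar> \<bar>(- c1) * \<phi> \<Delta> + (- c2)\<bar>"
    using correlation_bound[of "- c1" "- c2", OF _ _ \<open>0 < \<Delta>\<close> R not_vertex] c by simp
  then have "- (c1 * \<phi> P + c2 * \<phi> Q) < max \<bar>c1 + c2 * \<phi> \<Delta>\<bar> \<bar>c1 * \<phi> \<Delta> + c2\<bar>"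
    by (simp add: abs_minus_commute algebra_simps)
  then show ?thesis using correlation_bound[OF c \<open>0 < \<Delta>\<close> R not_vertex] by linarith
qed

end

lemma cm_profile_derivs:
  assumes "CMF \<phi>" "\<phi> 0 = 1" "(\<phi> \<longlongrightarrow> 0) at_top"
  shows "cm_profile \<phi> (deriv \<phi>) (deriv (deriv \<phi>))"
proof -
  have has_derivs: "\<And>n x. 0 < x \<Longrightarrow> ((deriv ^^ n) \<phi> has_real_derivative (deriv ^^ Suc n) \<phi> x) (at x)"
    and at_right_0: "continuous (at_right 0) \<phi>"
    and signs: "\<And>n x. 0 < x \<Longrightarrow> (-1) ^ n * (deriv ^^ n) \<phi> x \<ge> 0"
    using assms(1) unfolding CMF_def by auto
  have d3: "(deriv (deriv \<phi>) has_real_derivative deriv (deriv (deriv \<phi>)) x) (at x)" if "0 < x" for x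
    using has_derivs[of _ 2] that by (simp add: numeral_eq_Suc)
  have s3: "deriv (deriv (deriv \<phi>)) x \<le> 0" if "0 < x" for x
    using signs[of _ 3] that by (simp add: numeral_eq_Suc)
  have antimono'': "deriv (deriv \<phi>) y \<le> deriv (deriv \<phi>) x" if "0 < x" "x \<le> y" for x y
  proof (rule DERIV_nonpos_imp_nonincreasing[OF that(2)])
    fix z assume "x \<le> z"
    then have "0 < z" using that(1) by simp
    then show "\<exists>d. DERIV (deriv (deriv \<phi>)) z :> d \<and> d \<le> 0" using d3 s3 by blast
  qed
  have continuous: "continuous_on {0..} \<phi>"
  proof -
    have "continuous (at x within {0..}) \<phi>" if "0 \<le> x" for x
    proof (cases "x = 0")
      case True
      have "{0::real..} - {0} = {0<..} - {0}" by auto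
      then have "at (0::real) within {0..} = at_right 0" by (simp add: at_within_def)
      then show ?thesis using at_right_0 True by simp
    next
      case False
      then have "isCont \<phi> x" using has_derivs[of x 0] that DERIV_isCont by auto
      then show ?thesis by (rule continuous_at_imp_continuous_at_within)
    qed
    then show ?thesis using continuous_on_eq_continuous_within by auto
  qed
  have nonneg: "0 \<le> \<phi> x" if "0 \<le> x" for x
    using signs[of x 0] assms(2) that by (cases "x = 0") auto
  have "(\<phi> has_real_derivative deriv \<phi> x) (at x)" "deriv \<phi> x \<le> 0"
    "(deriv \<phi> has_real_derivative deriv (deriv \<phi>) x) (at x)" "0 \<le> deriv (deriv \<phi>) x"
    if "0 < x" for x
    using has_derivs[of x 0] has_derivs[of x 1] signs[of x 1] signs[of x 2] that
    by (simp_all add: numeral_eq_Suc)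
  then show ?thesis
    by unfold_locales (use assms(2,3) continuous nonneg antimono'' in auto)
qed

subsection \<open>Orthogonal matching pursuit on two atoms\<close>

lemma orth_proj_unique:
  fixes W :: "'h::real_inner set"
  assumes "subspace W" "v \<in> W" "\<forall>w\<in>W. inner (y - v) w = 0"
  shows "orth_proj W y = v"
  unfolding orth_proj_def
proof (rule the_equality)
  show "v \<in> W \<and> (\<forall>w\<in>W. inner (y - v) w = 0)" using assms by blast
  fix v' assume v': "v' \<in> W \<and> (\<forall>w\<in>W. inner (y - v') w = 0)"
  have "v - v' \<in> W" using assms v' by (simp add: subspace_diff)
  then have "inner (y - v') (v - v') - inner (y - v) (v - v') = 0" using assms v' by simp
  then have "inner (v - v') (v - v') = 0" by (simp add: inner_diff_left)
  then show "v' = v" by simp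
qed

lemma omp_residual_eq_0:
  assumes "y \<in> span (a ` S)"
  shows "omp_residual a y S = 0"
  using orth_proj_unique[OF subspace_span assms] unfolding omp_residual_def by simp

locale cm_dictionary = cm_profile +
  fixes a :: "real^'d \<Rightarrow> 'h::real_inner" and p :: real
  assumes p_pos: "0 < p" and p_le_1: "p \<le> 1"
    and inner_atoms: "inner (a x) (a y) = \<phi> (lp_pow p x y)"
begin

lemma coherence_sq_less_one:
  assumes "u \<noteq> v"
  shows "\<phi> (lp_pow p u v) * \<phi> (lp_pow p u v) < 1"
proof -
  define \<rho> where "\<rho> = \<phi> (lp_pow p u v)"
  have "0 \<le> \<rho>" "\<rho> < 1"
    unfolding \<rho>_def using nonneg[OF lp_pow_nonneg] less_one[OF lp_pow_pos[OF assms]] by auto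
  then have "\<rho> * \<rho> \<le> \<rho>" by (simp add: mult_left_le_one_le)
  then show ?thesis using \<open>\<rho> < 1\<close> unfolding \<rho>_def by linarith
qed

lemma correlation_off_support_less:
  assumes "u \<noteq> v" "\<theta> \<noteq> u" "\<theta> \<noteq> v" "c1 \<noteq> 0" "c2 \<noteq> 0"
  shows "\<bar>c1 * \<phi> (lp_pow p \<theta> u) + c2 * \<phi> (lp_pow p \<theta> v)\<bar>
    < max \<bar>c1 + c2 * \<phi> (lp_pow p u v)\<bar> \<bar>c1 * \<phi> (lp_pow p u v) + c2\<bar>"
proof (rule abs_correlation_bound)
  show "0 < lp_pow p u v" using lp_pow_pos assms(1) .
  show "\<not> (lp_pow p \<theta> u = 0 \<and> lp_pow p \<theta> v = lp_pow p u v)"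
    "\<not> (lp_pow p \<theta> u = lp_pow p u v \<and> lp_pow p \<theta> v = 0)"
    using assms(2,3) lp_pow_eq_0_iff by auto
qed (use assms lp_pow_triangle_region[OF p_pos p_le_1] in auto)

lemma first_selection_in_support:
  assumes "t1 \<noteq> t2" "c1 \<noteq> 0" "c2 \<noteq> 0"
    and max: "\<forall>\<theta>. \<bar>inner (a \<theta>) (c1 *\<^sub>R a t1 + c2 *\<^sub>R a t2)\<bar> \<le> \<bar>inner (a \<theta>') (c1 *\<^sub>R a t1 + c2 *\<^sub>R a t2)\<bar>"
  shows "\<theta>' = t1 \<or> \<theta>' = t2"
proof (rule ccontr)
  assume "\<not> (\<theta>' = t1 \<or> \<theta>' = t2)"
  then have "\<bar>c1 * \<phi> (lp_pow p \<theta>' t1) + c2 * \<phi> (lp_pow p \<theta>' t2)\<bar>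
    < max \<bar>c1 + c2 * \<phi> (lp_pow p t1 t2)\<bar> \<bar>c1 * \<phi> (lp_pow p t1 t2) + c2\<bar>"
    using correlation_off_support_less assms(1-3) by auto
  moreover have "inner (a \<theta>) (c1 *\<^sub>R a t1 + c2 *\<^sub>R a t2) = c1 * \<phi> (lp_pow p \<theta> t1) + c2 * \<phi> (lp_pow p \<theta> t2)" for \<theta>
    by (simp add: inner_add_right inner_atoms)
  ultimately show False
    using max[rule_format, of t1] max[rule_format, of t2] by (simp add: at_0 lp_pow_commute[of p t2 t1])
qed

lemma second_selection:
  assumes "u \<noteq> v" "c \<noteq> 0"
    and max: "\<forall>\<theta>. \<bar>inner (a \<theta>) (c *\<^sub>R (a u - \<phi> (lp_pow p u v) *\<^sub>R a v))\<bar>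
                 \<le> \<bar>inner (a \<theta>') (c *\<^sub>R (a u - \<phi> (lp_pow p u v) *\<^sub>R a v))\<bar>"
  shows "\<theta>' = u"
proof -
  define \<rho> where "\<rho> = \<phi> (lp_pow p u v)"
  have correlation: "inner (a \<theta>) (c *\<^sub>R (a u - \<rho> *\<^sub>R a v)) = c * \<phi> (lp_pow p \<theta> u) + (- c * \<rho>) * \<phi> (lp_pow p \<theta> v)" for \<theta>
    by (simp add: inner_atoms algebra_simps)
  have "\<rho> * \<rho> < 1" unfolding \<rho>_def using coherence_sq_less_one[OF assms(1)] .
  have at_u: "\<bar>c * (1 - \<rho> * \<rho>)\<bar> \<le> \<bar>c * \<phi> (lp_pow p \<theta>' u) + (- c * \<rho>) * \<phi> (lp_pow p \<theta>' v)\<bar>"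
    using max[rule_format, of u] unfolding \<rho>_def[symmetric] correlation
    by (simp add: at_0 \<rho>_def algebra_simps)
  show ?thesis
  proof (rule ccontr)
    assume "\<theta>' \<noteq> u"
    then have "\<phi> (lp_pow p \<theta>' u) < 1" using less_one lp_pow_pos by blast
    show False
    proof (cases "\<rho> = 0")
      case True
      then show False using at_u \<open>\<phi> (lp_pow p \<theta>' u) < 1\<close> assms(2) nonneg[OF lp_pow_nonneg[of p \<theta>' u]]
        by (simp add: abs_mult)
    next
      case False
      show False
      proof (cases "\<theta>' = v")
        case True
        then show False
          using at_u \<open>\<rho> * \<rho> < 1\<close> assms(2) by (simp add: at_0 \<rho>_def lp_pow_commute[of p v u])
      next
        case False
        then have "\<bar>c * \<phi> (lp_pow p \<theta>' u) + (- c * \<rho>) * \<phi> (lp_pow p \<theta>' v)\<bar> < \<bar>c * (1 - \<rho> * \<rho>)\<bar>"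
          using correlation_off_support_less[of u v \<theta>' c "- c * \<rho>"] assms \<open>\<theta>' \<noteq> u\<close> \<open>\<rho> \<noteq> 0\<close>
          unfolding \<rho>_def[symmetric] by (simp add: algebra_simps)
        then show False using at_u by linarith
      qed
    qed
  qed
qed

lemma omp_residual_singleton:
  "omp_residual a (c1 *\<^sub>R a u + c2 *\<^sub>R a v) {u} = c2 *\<^sub>R (a v - \<phi> (lp_pow p v u) *\<^sub>R a u)"
proof -
  define y where "y = c1 *\<^sub>R a u + c2 *\<^sub>R a v"
  define k where "k = c1 + c2 * \<phi> (lp_pow p v u)"
  have "orth_proj (span (a ` {u})) y = k *\<^sub>R a u"
  proof (rule orth_proj_unique)
    show "\<forall>w\<in>span (a ` {u}). inner (y - k *\<^sub>R a u) w = 0"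
      unfolding y_def k_def
      by (auto simp: span_singleton inner_atoms at_0 algebra_simps)
  qed (auto simp: span_base span_scale)
  then show ?thesis unfolding omp_residual_def y_def[symmetric] unfolding y_def k_def
    by (simp add: algebra_simps)
qed

lemma signal_nonzero:
  assumes "u \<noteq> v" "c1 \<noteq> 0"
  shows "c1 *\<^sub>R a u + c2 *\<^sub>R a v \<noteq> 0"
proof
  define \<rho> where "\<rho> = \<phi> (lp_pow p u v)"
  assume "c1 *\<^sub>R a u + c2 *\<^sub>R a v = 0"
  moreover have "inner (c1 *\<^sub>R a u + c2 *\<^sub>R a v) (a u - \<rho> *\<^sub>R a v) = c1 * (1 - \<rho> * \<rho>)"
    by (simp add: inner_atoms at_0 \<rho>_def lp_pow_commute[of p v u] algebra_simps)
  ultimately show False using coherence_sq_less_one[OF assms(1)] assms(2) unfolding \<rho>_def by simp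
qed

lemma omp_final_support_two_atoms:
  assumes "t1 \<noteq> t2" "c1 \<noteq> 0" "c2 \<noteq> 0"
    and "omp_state a (c1 *\<^sub>R a t1 + c2 *\<^sub>R a t2) S 0"
  shows "S = {t1, t2}"
proof -
  define y where "y = c1 *\<^sub>R a t1 + c2 *\<^sub>R a t2"
  define r1 where "r1 = c2 *\<^sub>R (a t2 - \<phi> (lp_pow p t2 t1) *\<^sub>R a t1)"
  define r2 where "r2 = c1 *\<^sub>R (a t1 - \<phi> (lp_pow p t1 t2) *\<^sub>R a t2)"
  have residual_t1: "omp_residual a y {t1} = r1"
    unfolding y_def r1_def by (rule omp_residual_singleton)
  have residual_t2: "omp_residual a y {t2} = r2"
    unfolding y_def r2_def using omp_residual_singleton[of c2 t2 c1 t1] by (simp add: add.commute)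
  have residual_t12: "omp_residual a y {t1, t2} = 0"
    unfolding y_def by (intro omp_residual_eq_0 span_add span_scale span_base) auto
  have "r1 = c2 *\<^sub>R a t2 + (- c2 * \<phi> (lp_pow p t2 t1)) *\<^sub>R a t1"
    "r2 = c1 *\<^sub>R a t1 + (- c1 * \<phi> (lp_pow p t1 t2)) *\<^sub>R a t2"
    unfolding r1_def r2_def by (simp_all add: algebra_simps)
  then have nonzero: "y \<noteq> 0" "r1 \<noteq> 0" "r2 \<noteq> 0"
    unfolding y_def using signal_nonzero[of t1 t2 c1] signal_nonzero[of t2 t1 c2] assms(1-3)
    by metis+
  have "(S' = {} \<and> r = y) \<or> (S' = {t1} \<and> r = r1) \<or> (S' = {t2} \<and> r = r2) \<or> (S' = {t1, t2} \<and> r = 0)"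
    if "omp_state a y S' r" for S' r
    using that
  proof (induction rule: omp_state.induct)
    case (step S r \<theta>)
    then consider "S = {} \<and> r = y" | "S = {t1} \<and> r = r1" | "S = {t2} \<and> r = r2"
      by auto
    then show ?case
    proof cases
      case 1
      then have "\<theta> = t1 \<or> \<theta> = t2"
        using first_selection_in_support assms(1-3) step.hyps(3) unfolding y_def by blast
      then show ?thesis using 1 residual_t1 residual_t2 by auto
    next
      case 2
      then have "\<theta> = t2"
        using second_selection[of t2 t1 c2] assms(1,3) step.hyps(3) unfolding r1_def by auto
      then show ?thesis using 2 residual_t12 by (simp add: insert_commute)
    next
      case 3
      then have "\<theta> = t1"
        using second_selection[of t1 t2 c1] assms(1,2) step.hyps(3) unfolding r2_def by auto
      then show ?thesis using 3 residual_t12 by simp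
    qed
  qed simp
  then show ?thesis using assms(4) nonzero unfolding y_def by fastforce
qed

end

theorem mainTheorem14:
  fixes a :: "real^'d \<Rightarrow> 'h::{real_inner,complete_space}"
    and \<phi> :: "real \<Rightarrow> real" and p :: real
    and t1 t2 :: "real^'d"
  assumes dict: "CMF_dictionary a \<phi> p"
    and distinct: "t1 \<noteq> t2"
    and cond: "\<forall>\<theta> \<in> Cart {t1, t2} - {t1, t2}.
       (let st = (\<lambda>l::2. if l = 1 then t1 else t2);
            G = (\<chi> l l'. kernel a (st l) (st l')) :: real^2^2;
            g = (\<chi> l. kernel a \<theta> (st l)) :: real^2
        in (\<Sum>l\<in>UNIV. \<bar>(matrix_inv G *v g) $ l\<bar>) < 1)"
  shows "exact_2step_recovery a t1 t2"
proof -
  have "cm_profile \<phi> (deriv \<phi>) (deriv (deriv \<phi>))"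
    using dict cm_profile_derivs unfolding CMF_dictionary_def by blast
  then interpret cm_dictionary \<phi> "deriv \<phi>" "deriv (deriv \<phi>)" a p
    using dict unfolding CMF_dictionary_def cm_dictionary_def cm_dictionary_axioms_def by blast
  show ?thesis
    unfolding exact_2step_recovery_def omp_reachable_support_def
    using omp_final_support_two_atoms distinct by blast
qed

end
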